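(* For every $n\ge2$, consider all plane trees on $n$ vertices and, in each, all pairs $(u,w)$ of vertices with $w$ a proper descendant of $u$ (downward paths). Then: - the total number of such pairs is $\frac12\bigl(4^{n-1}-\binom{2n-2}{n-1}\bigr)$; - the total of $d(u,w)$ over all such pairs is $\frac{(2n-3)!}{((n-2)!)^2}$, which also equals $\binom n2 c_{n-1}$. Hence the expected length of a uniformly random downward path in a uniformly random plane tree on $n$ vertices is $$\frac{n-1}{\frac{(2n-2)!!}{(2n-3)!!}-1}=\sqrt{\frac n\pi}+\frac1\pi+O\Bigl(\frac1{\sqrt n}\Bigr).$$
   Context: General (plane) trees are rooted trees in which each vertex may have any number of children, linearly ordered. The size of a tree is its number of vertices. $d(u,w)$ is the number of edges of the path between $u$ and $w$. $c_{m}=\frac1{m+1}\binom{2m}{m}$ is the $m$th Catalan number; $c_{n-1}$ is the number of plane trees on $n$ vertices. The double factorials are $(2m)!!=2\cdot4\cdots(2m)$ and $(2m-1)!!=1\cdot3\cdots(2m-1)$. *)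

theory Defs
  imports Complex_Main "HOL-Library.Sublist" "HOL-Library.Landau_Symbols"
begin

datatype ptree = Node "ptree list"

fun tsize :: "ptree \<Rightarrow> nat" where
  "tsize (Node ts) = Suc (sum_list (map tsize ts))"

text \<open>Vertices of a tree are identified with their positions (Dewey addresses):
  the root is [], and i # p is vertex p of the i-th child subtree.\<close>
inductive is_pos :: "ptree \<Rightarrow> nat list \<Rightarrow> bool" where
  root: "is_pos t []"
| child: "i < length ts \<Longrightarrow> is_pos (ts ! i) p \<Longrightarrow> is_pos (Node ts) (i # p)"

definition vertices :: "ptree \<Rightarrow> nat list set" where
  "vertices t = {p. is_pos t p}"

definition trees :: "nat \<Rightarrow> ptree set" where
  "trees n = {t. tsize t = n}"

definition down_pairs :: "ptree \<Rightarrow> (nat list \<times> nat list) set" where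
  "down_pairs t = {(u, w). u \<in> vertices t \<and> w \<in> vertices t \<and> strict_prefix u w}"

definition dist_down :: "nat list \<Rightarrow> nat list \<Rightarrow> nat" where
  "dist_down u w = length w - length u"

definition total_pairs :: "nat \<Rightarrow> nat" where
  "total_pairs n = (\<Sum>t\<in>trees n. card (down_pairs t))"

definition total_dist :: "nat \<Rightarrow> nat" where
  "total_dist n = (\<Sum>t\<in>trees n. \<Sum>(u, w)\<in>down_pairs t. dist_down u w)"

text \<open>Expected length of a uniformly random downward path among all downward paths
  of all plane trees on n vertices.\<close>
definition expected_len :: "nat \<Rightarrow> real" where
  "expected_len n = real (total_dist n) / real (total_pairs n)"

fun dfact :: "nat \<Rightarrow> nat" where
  "dfact 0 = 1"
| "dfact (Suc 0) = 1"
| "dfact (Suc (Suc n)) = Suc (Suc n) * dfact n"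

definition catalan :: "nat \<Rightarrow> real" where
  "catalan m = real ((2 * m) choose m) / real (m + 1)"

end

theory Submission
  imports Defs "HOL-Computational_Algebra.Formal_Power_Series" "HOL-Analysis.Analysis"
begin

text \<open>A vertex at depth \<open>d\<close> is the lower end of exactly \<open>d\<close> downward paths, of lengths
  \<open>1, \<dots>, d\<close>, so both totals are sums over all vertices of functions of the depth. Splitting off
  the first subtree of the root turns these sums, together with the number of trees, into
  convolution recurrences. These are the coefficient recurrences of equations solved by
  \<open>C = (1 - \<surd>(1 - 4x))/2\<close>, \<open>x (1/(1 - 4x) - 1/\<surd>(1 - 4x))/2\<close> and \<open>x^2/(1 - 4x)^(3/2)\<close>, all
  built from the central binomial series \<open>1/\<surd>(1 - 4x)\<close>. The expected length is then
  \<open>m/(q - 1)\<close> with \<open>q = (2m)!!/(2m - 1)!!\<close> and \<open>m = n - 1\<close>, and the monotone convergence of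
  Wallis' product pins \<open>q^2\<close> between \<open>\<pi>m\<close> and \<open>\<pi>(m + 1/2)\<close>.\<close>

section \<open>Vertices and downward paths\<close>

lemma tsize_pos: "0 < tsize t"
  by (cases t) auto

lemma sum_UN_image_inj:
  assumes "finite I" "\<And>i. i \<in> I \<Longrightarrow> finite (A i)"
    and "\<And>i j x y. i \<in> I \<Longrightarrow> j \<in> I \<Longrightarrow> x \<in> A i \<Longrightarrow> y \<in> A j \<Longrightarrow>
           f i x = f j y \<Longrightarrow> i = j \<and> x = y"
  shows "(\<Sum>z\<in>(\<Union>i\<in>I. f i ` A i). g z) = (\<Sum>i\<in>I. \<Sum>x\<in>A i. g (f i x))"
proof -
  have "(\<Sum>z\<in>(\<Union>i\<in>I. f i ` A i). g z) = (\<Sum>i\<in>I. \<Sum>z\<in>f i ` A i. g z)"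
    by (rule sum.UNION_disjoint) (use assms in fastforce)+
  also have "\<dots> = (\<Sum>i\<in>I. \<Sum>x\<in>A i. g (f i x))"
    using assms(3) by (intro sum.cong refl sum.reindex_cong[where l = "f _"]) (auto simp: inj_on_def)
  finally show ?thesis .
qed

lemma vertices_Node:
  "vertices (Node ts) = insert [] (\<Union>i<length ts. (#) i ` vertices (ts ! i))"
proof -
  have "is_pos (Node ts) p \<longleftrightarrow> p = [] \<or> (\<exists>i<length ts. p \<in> (#) i ` vertices (ts ! i))" for p
    by (auto simp: vertices_def elim: is_pos.cases intro: is_pos.intros)
  then show ?thesis by (auto simp: vertices_def)
qed

lemma finite_vertices: "finite (vertices t)"
  by (induction t) (simp add: vertices_Node)

lemma sum_vertices_Node:
  "(\<Sum>p\<in>vertices (Node ts). g p) = g [] + (\<Sum>i<length ts. \<Sum>p\<in>vertices (ts ! i). g (i # p))"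
proof -
  have "(\<Sum>p\<in>vertices (Node ts). g p) = g [] + (\<Sum>p\<in>(\<Union>i<length ts. (#) i ` vertices (ts ! i)). g p)"
    unfolding vertices_Node by (rule sum.insert) (auto simp: finite_vertices)
  also have "(\<Sum>p\<in>(\<Union>i<length ts. (#) i ` vertices (ts ! i)). g p)
      = (\<Sum>i<length ts. \<Sum>p\<in>vertices (ts ! i). g (i # p))"
    by (rule sum_UN_image_inj) (auto simp: finite_vertices)
  finally show ?thesis .
qed

lemma card_vertices: "card (vertices t) = tsize t"
proof (induction t)
  case (Node ts)
  have "card (vertices (Node ts)) = (\<Sum>p\<in>vertices (Node ts). 1)" by simp
  also have "\<dots> = 1 + (\<Sum>i<length ts. card (vertices (ts ! i)))"
    by (subst sum_vertices_Node) simp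
  also have "\<dots> = 1 + (\<Sum>i<length ts. tsize (ts ! i))"
    using Node by simp
  finally show ?case by (simp add: sum_list_sum_nth atLeast0LessThan)
qed

lemma is_pos_prefix: "is_pos t w \<Longrightarrow> prefix u w \<Longrightarrow> is_pos t u"
proof (induction arbitrary: u rule: is_pos.induct)
  case (child i ts p)
  then show ?case by (cases u) (auto intro: is_pos.intros)
qed (simp add: is_pos.root)

lemma strict_prefix_iff_take:
  "strict_prefix u w \<longleftrightarrow> (\<exists>k<length w. u = take k w)"
proof
  assume "strict_prefix u w"
  then show "\<exists>k<length w. u = take k w"
    by (metis append_eq_conv_conj prefix_def prefix_length_less prefix_order.less_imp_le)
next
  assume "\<exists>k<length w. u = take k w"
  then show "strict_prefix u w"
    by (metis length_take min.absorb4 prefix_order.dual_order.not_eq_order_implies_strict take_is_prefix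
        nat_less_le)
qed

lemma down_pairs_eq:
  "down_pairs t = (\<Union>w\<in>vertices t. (\<lambda>k. (take k w, w)) ` {..<length w})"
  by (auto simp: down_pairs_def vertices_def strict_prefix_iff_take
      intro: is_pos_prefix[OF _ take_is_prefix])

lemma sum_down_pairs:
  "(\<Sum>(u, w)\<in>down_pairs t. f u w) = (\<Sum>w\<in>vertices t. \<Sum>k<length w. f (take k w) w)"
  unfolding down_pairs_eq
  by (subst sum_UN_image_inj) (auto simp: finite_vertices, metis length_take min.absorb4)

section \<open>Splitting off the first subtree\<close>

definition graft :: "ptree \<Rightarrow> ptree \<Rightarrow> ptree" where
  "graft a t = (case t of Node ts \<Rightarrow> Node (a # ts))"

lemma tsize_graft: "tsize (graft a t) = tsize a + tsize t"
  by (cases t) (simp add: graft_def)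

lemma graft_inject: "graft a t = graft a' t' \<longleftrightarrow> a = a' \<and> t = t'"
  by (cases t; cases t') (auto simp: graft_def)

lemma sum_vertices_graft:
  "(\<Sum>p\<in>vertices (graft a t). h (length p)) =
     (\<Sum>p\<in>vertices a. h (Suc (length p))) + (\<Sum>p\<in>vertices t. h (length p))"
  by (cases t) (simp add: graft_def sum_vertices_Node lessThan_Suc_eq_insert_0 sum.reindex ac_simps)

lemma mem_trees: "t \<in> trees n \<longleftrightarrow> tsize t = n"
  by (simp add: trees_def)

lemma trees_0: "trees 0 = {}"
  using tsize_pos by (auto simp: trees_def)

lemma trees_1: "trees (Suc 0) = {Node []}"
proof -
  have "tsize t = Suc 0 \<longleftrightarrow> t = Node []" for t
  proof (cases t)
    case (Node ts)
    then show ?thesis using tsize_pos[of "hd ts"] by (cases ts) auto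
  qed
  then show ?thesis by (auto simp: trees_def)
qed

lemma trees_decomp:
  assumes "n \<ge> 2"
  shows "trees n = (\<Union>k\<in>{1..n-1}. (\<lambda>(a, t). graft a t) ` (trees k \<times> trees (n - k)))"
proof (intro set_eqI iffI)
  fix t assume "t \<in> trees n"
  then have size_t: "tsize t = n" by (simp add: trees_def)
  obtain ts where t: "t = Node ts" by (cases t)
  with size_t assms obtain a rest where "ts = a # rest" by (cases ts) auto
  with t have t_graft: "t = graft a (Node rest)" by (simp add: graft_def)
  with size_t have "tsize a + tsize (Node rest) = n" by (simp add: tsize_graft)
  moreover have "0 < tsize a" "0 < tsize (Node rest)" by (rule tsize_pos)+
  ultimately show "t \<in> (\<Union>k\<in>{1..n-1}. (\<lambda>(a, t). graft a t) ` (trees k \<times> trees (n - k)))"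
    using t_graft by (auto simp: trees_def intro!: bexI[of _ "tsize a"])
qed (use assms in \<open>auto simp: trees_def tsize_graft\<close>)

lemma finite_trees: "finite (trees n)"
proof (induction n rule: less_induct)
  case (less n)
  consider "n = 0" | "n = 1" | "n \<ge> 2" by linarith
  then show ?case
    by cases (use less in \<open>auto simp: trees_0 trees_1 trees_decomp\<close>)
qed

lemma sum_trees_decomp:
  assumes "n \<ge> 2"
  shows "(\<Sum>t\<in>trees n. f t) = (\<Sum>k=1..n-1. \<Sum>a\<in>trees k. \<Sum>t\<in>trees (n - k). f (graft a t))"
proof -
  have "(\<Sum>t\<in>trees n. f t) = (\<Sum>k=1..n-1. \<Sum>(a, t)\<in>trees k \<times> trees (n - k). f (graft a t))"
    unfolding trees_decomp[OF assms]
    by (subst sum_UN_image_inj[where f = "\<lambda>_ (a, t). graft a t"])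
      (auto simp: finite_trees mem_trees graft_inject case_prod_unfold)
  then show ?thesis by (simp add: sum.cartesian_product)
qed

definition depth_total :: "(nat \<Rightarrow> real) \<Rightarrow> nat \<Rightarrow> real" where
  "depth_total h n = (\<Sum>t\<in>trees n. \<Sum>p\<in>vertices t. h (length p))"

lemma card_trees_rec:
  "n \<ge> 2 \<Longrightarrow> real (card (trees n)) = (\<Sum>k=1..n-1. real (card (trees k)) * real (card (trees (n - k))))"
  using sum_trees_decomp[of n "\<lambda>_. 1 :: real"] by simp

lemma sum_sum_add_split:
  "(\<Sum>a\<in>A. \<Sum>b\<in>B. f a + g b :: real) = sum f A * real (card B) + real (card A) * sum g B"
  by (simp add: sum.distrib sum_distrib_left sum_distrib_right mult.commute)

lemma depth_total_rec:
  assumes "n \<ge> 2"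
  shows "depth_total h n = (\<Sum>k=1..n-1. depth_total (h \<circ> Suc) k * real (card (trees (n - k)))
           + real (card (trees k)) * depth_total h (n - k))"
  unfolding depth_total_def sum_trees_decomp[OF assms] sum_vertices_graft sum_sum_add_split
  by simp

lemma depth_total_add: "depth_total (\<lambda>d. f d + g d) n = depth_total f n + depth_total g n"
  by (simp add: depth_total_def sum.distrib)

lemma depth_total_one: "depth_total (\<lambda>_. 1) n = real n * real (card (trees n))"
proof -
  have "depth_total (\<lambda>_. 1) n = (\<Sum>t\<in>trees n. real (tsize t))"
    by (simp add: depth_total_def card_vertices)
  then show ?thesis by (simp add: trees_def)
qed

lemma card_down_pairs: "card (down_pairs t) = (\<Sum>w\<in>vertices t. length w)"
proof -
  have "(\<Sum>(u, w)\<in>down_pairs t. 1) = (\<Sum>w\<in>vertices t. \<Sum>k<length w. 1::nat)"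
    by (rule sum_down_pairs)
  then show ?thesis by (simp add: case_prod_unfold)
qed

lemma total_pairs_eq_depth_total: "real (total_pairs n) = depth_total real n"
  by (simp add: total_pairs_def depth_total_def card_down_pairs)

lemma sum_lessThan_diff: "(\<Sum>k<d. real (d - k)) = real d * (real d + 1) / 2"
proof (induction d)
  case (Suc d)
  have "(\<Sum>k<Suc d. real (Suc d - k)) = real (Suc d) + (\<Sum>k<d. real (d - k))"
    by (subst sum.lessThan_Suc_shift) (simp del: of_nat_diff)
  with Suc show ?case by (simp add: field_simps)
qed simp

lemma total_dist_eq_depth_total: "real (total_dist n) = depth_total (\<lambda>d. real d * (real d + 1) / 2) n"
  by (simp add: total_dist_def depth_total_def sum_down_pairs dist_down_def
      flip: sum_lessThan_diff)

lemma total_pairs_rec: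
  assumes "n \<ge> 2"
  shows "real (total_pairs n) = (\<Sum>k=1..n-1.
     (real (total_pairs k) + real k * real (card (trees k))) * real (card (trees (n - k)))
     + real (card (trees k)) * real (total_pairs (n - k)))"
proof -
  have "real \<circ> Suc = (\<lambda>d. real d + 1)" by auto
  then have "depth_total (real \<circ> Suc) k = depth_total real k + depth_total (\<lambda>_. 1) k" for k
    by (simp flip: depth_total_add)
  then show ?thesis
    by (simp add: total_pairs_eq_depth_total depth_total_rec[OF assms] depth_total_one)
qed

lemma total_dist_rec:
  assumes "n \<ge> 2"
  shows "real (total_dist n) = (\<Sum>k=1..n-1.
     (real (total_dist k) + real (total_pairs k) + real k * real (card (trees k))) * real (card (trees (n - k)))
     + real (card (trees k)) * real (total_dist (n - k)))"
proof -
  let ?h = "\<lambda>d. real d * (real d + 1) / 2"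
  have "?h \<circ> Suc = (\<lambda>d. ?h d + real d + 1)"
    by (auto simp: field_simps)
  then have "depth_total (?h \<circ> Suc) k = depth_total ?h k + depth_total real k + depth_total (\<lambda>_. 1) k" for k
    by (simp flip: depth_total_add)
  then show ?thesis
    by (simp add: total_dist_eq_depth_total total_pairs_eq_depth_total depth_total_rec[OF assms] depth_total_one)
qed

section \<open>Generating functions\<close>

lemma central_binomial_Suc:
  "real (Suc k) * real ((2 * Suc k) choose Suc k) = 2 * (2 * real k + 1) * real ((2 * k) choose k)"
proof -
  have fact_eq: "fact (2 * Suc k) = (2 * real k + 2) * (2 * real k + 1) * fact (2 * k)"
    by (simp add: algebra_simps)
  have "real (Suc k) * real ((2 * Suc k) choose Suc k) = real (Suc k) * (fact (2 * Suc k) / (fact (Suc k))^2)"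
    by (subst binomial_fact) (auto simp: power2_eq_square)
  also have "\<dots> = 2 * (2 * real k + 1) * (fact (2 * k) / (fact k)^2)"
  proof -
    have "fact (Suc k) = (real k + 1) * (fact k :: real)" by simp
    moreover have "real k + 1 \<noteq> 0" by linarith
    ultimately show ?thesis
      unfolding fact_eq by (simp add: divide_simps power2_eq_square) (simp add: algebra_simps)
  qed
  also have "fact (2 * k) / (fact k)^2 = real ((2 * k) choose k)"
    by (subst binomial_fact) (auto simp: power2_eq_square)
  finally show ?thesis .
qed

lemma central_binomial_gchoose: "real ((2 * k) choose k) = (-4) ^ k * ((-1/2 :: real) gchoose k)"
proof (induction k)
  case (Suc k)
  have "real (Suc k) * real ((2 * Suc k) choose Suc k) = 2 * (2 * real k + 1) * ((-4) ^ k * ((-1/2) gchoose k))"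
    by (simp only: central_binomial_Suc Suc)
  also have "\<dots> = (-4) ^ Suc k * (((-1/2) gchoose k) * (-1/2) - real k * ((-1/2) gchoose k))"
    by (simp add: algebra_simps)
  also have "\<dots> = real (Suc k) * ((-4) ^ Suc k * ((-1/2) gchoose Suc k))"
    by (simp only: gbinomial_mult_1') (simp add: algebra_simps)
  finally show ?case
    by (metis mult_cancel_left of_nat_eq_0_iff nat.distinct(1))
qed simp

definition central_binomial_fps :: "real fps" where
  "central_binomial_fps = Abs_fps (\<lambda>k. real ((2 * k) choose k))"

definition four_pow_fps :: "real fps" where
  "four_pow_fps = Abs_fps (\<lambda>k. 4 ^ k)"

text \<open>The central binomial series is \<open>(1 - 4x)^(-1/2)\<close>; squaring it is Vandermonde's
  convolution for \<open>-1/2 + -1/2 = -1\<close>.\<close>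
lemma central_binomial_fps_squared: "central_binomial_fps * central_binomial_fps = four_pow_fps"
proof (rule fps_ext)
  fix n
  let ?g = "\<lambda>i. (-1/2 :: real) gchoose i"
  have "fps_nth (central_binomial_fps * central_binomial_fps) n
      = (\<Sum>i=0..n. (-4) ^ i * ?g i * ((-4) ^ (n - i) * ?g (n - i)))"
    by (simp add: fps_mult_nth central_binomial_fps_def central_binomial_gchoose)
  also have "\<dots> = (\<Sum>i=0..n. (-4) ^ n * (?g i * ?g (n - i)))"
  proof (intro sum.cong refl)
    fix i assume "i \<in> {0..n}"
    then have "(-4 :: real) ^ n = (-4) ^ i * (-4) ^ (n - i)" by (simp flip: power_add)
    then show "(-4) ^ i * ?g i * ((-4) ^ (n - i) * ?g (n - i)) = (-4) ^ n * (?g i * ?g (n - i))"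
      by (simp only: mult_ac)
  qed
  also have "\<dots> = (-4) ^ n * ((-1 :: real) gchoose n)"
    by (simp add: gbinomial_Vandermonde flip: sum_distrib_left)
  also have "(-1 :: real) gchoose n = (-1) ^ n"
    using gbinomial_minus[of "1 :: real" n] by (simp add: binomial_gbinomial[symmetric])
  finally show "fps_nth (central_binomial_fps * central_binomial_fps) n = fps_nth four_pow_fps n"
    by (simp add: four_pow_fps_def flip: power_mult_distrib)
qed

lemma four_pow_fps_geometric: "four_pow_fps * (1 - 4 * fps_X) = 1"
proof (rule fps_ext)
  fix n
  have "four_pow_fps * (1 - 4 * fps_X) = four_pow_fps - fps_const 4 * (fps_X * four_pow_fps)"
    by (simp add: algebra_simps numeral_fps_const)
  then show "fps_nth (four_pow_fps * (1 - 4 * fps_X)) n = fps_nth 1 n"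
    by (cases n) (simp_all add: four_pow_fps_def)
qed

definition sqrt_fps :: "real fps" where
  "sqrt_fps = (1 - 4 * fps_X) * central_binomial_fps"

lemma central_binomial_fps_sqrt_fps: "central_binomial_fps * sqrt_fps = 1"
proof -
  have "central_binomial_fps * sqrt_fps = (central_binomial_fps * central_binomial_fps) * (1 - 4 * fps_X)"
    by (simp add: sqrt_fps_def ac_simps)
  then show ?thesis by (simp add: central_binomial_fps_squared four_pow_fps_geometric)
qed

lemma sqrt_fps_squared: "sqrt_fps * sqrt_fps = 1 - 4 * fps_X"
proof -
  have "sqrt_fps * sqrt_fps = (1 - 4 * fps_X) * (central_binomial_fps * sqrt_fps)"
    by (simp add: sqrt_fps_def ac_simps)
  then show ?thesis by (simp add: central_binomial_fps_sqrt_fps)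
qed

lemma four_pow_fps_sqrt_fps: "four_pow_fps * sqrt_fps = central_binomial_fps"
proof -
  have "four_pow_fps * sqrt_fps = (four_pow_fps * (1 - 4 * fps_X)) * central_binomial_fps"
    by (simp add: sqrt_fps_def ac_simps)
  then show ?thesis by (simp add: four_pow_fps_geometric)
qed

definition catalan_fps :: "real fps" where
  "catalan_fps = fps_const (1/2) * (1 - sqrt_fps)"

definition pairs_fps :: "real fps" where
  "pairs_fps = fps_const (1/2) * fps_X * (four_pow_fps - central_binomial_fps)"

definition dist_fps :: "real fps" where
  "dist_fps = fps_X^2 * four_pow_fps * central_binomial_fps"

lemma two_times_half_fps: "2 * fps_const (1/2 :: real) = 1"
  by (simp add: numeral_fps_const)

lemma two_times_catalan_fps: "2 * catalan_fps = 1 - sqrt_fps"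
  and two_times_pairs_fps: "2 * pairs_fps = fps_X * (four_pow_fps - central_binomial_fps)"
  by (simp_all only: catalan_fps_def pairs_fps_def mult.assoc[symmetric] two_times_half_fps mult_1)

lemma fps_mult_4_cancel: "(4 :: real fps) * f = 4 * g \<Longrightarrow> f = g"
  by simp

lemma catalan_fps_equation: "catalan_fps = fps_X + catalan_fps * catalan_fps"
proof -
  have "4 * (fps_X + catalan_fps * catalan_fps) = 4 * fps_X + (2 * catalan_fps) * (2 * catalan_fps)"
    by (simp add: algebra_simps)
  also have "\<dots> = 4 * fps_X + 1 - 2 * sqrt_fps + sqrt_fps * sqrt_fps"
    unfolding two_times_catalan_fps by (simp add: algebra_simps)
  also have "\<dots> = 2 * (2 * catalan_fps)"
    unfolding sqrt_fps_squared two_times_catalan_fps by (simp add: algebra_simps)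
  also have "\<dots> = 4 * catalan_fps" by simp
  finally show ?thesis by (rule fps_mult_4_cancel[THEN sym])
qed

lemma pairs_fps_equation:
  "pairs_fps = pairs_fps * catalan_fps + fps_X * central_binomial_fps * catalan_fps + catalan_fps * pairs_fps"
proof -
  have "4 * (pairs_fps * catalan_fps + fps_X * central_binomial_fps * catalan_fps + catalan_fps * pairs_fps)
      = 2 * ((2 * pairs_fps) * (2 * catalan_fps)) + 2 * fps_X * central_binomial_fps * (2 * catalan_fps)"
    by (simp add: algebra_simps)
  also have "\<dots> = 2 * fps_X * (four_pow_fps - four_pow_fps * sqrt_fps)"
    unfolding two_times_pairs_fps two_times_catalan_fps by (simp add: algebra_simps)
  also have "\<dots> = 2 * (2 * pairs_fps)"
    unfolding four_pow_fps_sqrt_fps two_times_pairs_fps by (simp add: algebra_simps)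
  also have "\<dots> = 4 * pairs_fps" by simp
  finally show ?thesis by (rule fps_mult_4_cancel[THEN sym])
qed

lemma dist_fps_equation:
  "dist_fps = (dist_fps + pairs_fps + fps_X * central_binomial_fps) * catalan_fps + catalan_fps * dist_fps"
proof -
  have dist_sqrt: "dist_fps * sqrt_fps = fps_X^2 * four_pow_fps"
    by (simp add: dist_fps_def mult.assoc central_binomial_fps_sqrt_fps)
  have four_pow_minus_1: "four_pow_fps - 1 = 4 * fps_X * four_pow_fps"
    using four_pow_fps_geometric by (simp add: algebra_simps)
  have "4 * ((dist_fps + pairs_fps + fps_X * central_binomial_fps) * catalan_fps + catalan_fps * dist_fps)
      = 4 * dist_fps * (2 * catalan_fps) + (2 * pairs_fps) * (2 * catalan_fps)
        + 2 * fps_X * central_binomial_fps * (2 * catalan_fps)"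
    by (simp add: algebra_simps)
  also have "\<dots> = 4 * dist_fps - 4 * (dist_fps * sqrt_fps)
      + fps_X * (four_pow_fps + central_binomial_fps - four_pow_fps * sqrt_fps - central_binomial_fps * sqrt_fps)"
    unfolding two_times_pairs_fps two_times_catalan_fps by (simp add: algebra_simps)
  also have "\<dots> = 4 * dist_fps - 4 * (fps_X^2 * four_pow_fps) + fps_X * (four_pow_fps - 1)"
    by (simp add: four_pow_fps_sqrt_fps central_binomial_fps_sqrt_fps dist_sqrt)
  also have "\<dots> = 4 * dist_fps"
    by (simp add: four_pow_minus_1 algebra_simps power2_eq_square)
  finally show ?thesis by (rule fps_mult_4_cancel[THEN sym])
qed

lemma fps_mult_nth_interior:
  fixes f g :: "'a::comm_semiring_1 fps"
  assumes "fps_nth f 0 = 0" "fps_nth g 0 = 0"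
  shows "fps_nth (f * g) n = (\<Sum>k=1..n-1. fps_nth f k * fps_nth g (n - k))"
proof (cases "n = 0")
  case False
  have "{0..n} = insert 0 (insert n {1..n-1})" using False by auto
  then show ?thesis using False assms by (simp add: fps_mult_nth)
qed (simp add: fps_mult_nth assms)

lemma catalan_fps_nth_0: "fps_nth catalan_fps 0 = 0"
  by (simp add: catalan_fps_def sqrt_fps_def central_binomial_fps_def)

lemma catalan_fps_nth_Suc: "fps_nth catalan_fps (Suc m) = catalan m"
proof -
  define c where "c = real ((2 * m) choose m)"
  have "fps_nth sqrt_fps (Suc m) = real ((2 * Suc m) choose Suc m) - 4 * c"
    by (simp add: sqrt_fps_def central_binomial_fps_def algebra_simps numeral_fps_const c_def
        del: binomial_Suc_Suc)
  also have "real ((2 * Suc m) choose Suc m) = 2 * (2 * real m + 1) * c / (real m + 1)"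
    using central_binomial_Suc[of m] unfolding c_def by (simp add: field_simps del: binomial_Suc_Suc)
  finally show ?thesis
    by (simp add: catalan_fps_def catalan_def c_def field_simps del: binomial_Suc_Suc)
qed

lemma X_central_binomial_fps_nth: "fps_nth (fps_X * central_binomial_fps) k = real k * fps_nth catalan_fps k"
  by (cases k) (simp_all add: catalan_fps_nth_Suc catalan_def central_binomial_fps_def catalan_fps_nth_0)

lemma pairs_fps_nth_0: "fps_nth pairs_fps 0 = 0"
  by (simp add: pairs_fps_def)

lemma pairs_fps_nth: "n \<ge> 1 \<Longrightarrow> fps_nth pairs_fps n = (4 ^ (n - 1) - real ((2 * (n - 1)) choose (n - 1))) / 2"
  by (simp add: pairs_fps_def mult.assoc four_pow_fps_def central_binomial_fps_def)

lemma four_pow_central_binomial_fps_nth: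
  "fps_nth (four_pow_fps * central_binomial_fps) m = (2 * real m + 1) * real ((2 * m) choose m)"
proof (induction m)
  case (Suc m)
  have "four_pow_fps * central_binomial_fps - fps_const 4 * (fps_X * (four_pow_fps * central_binomial_fps))
      = four_pow_fps * (1 - 4 * fps_X) * central_binomial_fps"
    by (simp add: algebra_simps numeral_fps_const)
  then have "four_pow_fps * central_binomial_fps
      = central_binomial_fps + fps_const 4 * (fps_X * (four_pow_fps * central_binomial_fps))"
    by (simp add: four_pow_fps_geometric diff_eq_eq)
  then have "fps_nth (four_pow_fps * central_binomial_fps) (Suc m)
      = fps_nth (central_binomial_fps + fps_const 4 * (fps_X * (four_pow_fps * central_binomial_fps))) (Suc m)"
    by (rule arg_cong)
  also have "\<dots> = fps_nth central_binomial_fps (Suc m) + 4 * fps_nth (four_pow_fps * central_binomial_fps) m"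
    by simp
  also have "\<dots> = real ((2 * Suc m) choose Suc m) + 4 * ((2 * real m + 1) * real ((2 * m) choose m))"
    unfolding Suc by (simp add: central_binomial_fps_def del: binomial_Suc_Suc)
  also have "\<dots> = (2 * real (Suc m) + 1) * real ((2 * Suc m) choose Suc m)"
    using central_binomial_Suc[of m] by (simp add: algebra_simps del: binomial_Suc_Suc)
  finally show ?case .
qed (simp add: four_pow_fps_def central_binomial_fps_def)

lemma dist_fps_nth_0: "fps_nth dist_fps 0 = 0"
  by (simp add: dist_fps_def)

lemma dist_fps_nth:
  "n \<ge> 2 \<Longrightarrow> fps_nth dist_fps n = (2 * real (n - 2) + 1) * real ((2 * (n - 2)) choose (n - 2))"
  by (simp add: dist_fps_def mult.assoc fps_X_power_mult_nth four_pow_central_binomial_fps_nth)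

lemma catalan_fps_rec:
  "n \<ge> 2 \<Longrightarrow> fps_nth catalan_fps n = (\<Sum>k=1..n-1. fps_nth catalan_fps k * fps_nth catalan_fps (n - k))"
  by (subst catalan_fps_equation) (simp add: fps_mult_nth_interior catalan_fps_nth_0)

lemma pairs_fps_rec:
  assumes "n \<ge> 2"
  shows "fps_nth pairs_fps n = (\<Sum>k=1..n-1.
     (fps_nth pairs_fps k + real k * fps_nth catalan_fps k) * fps_nth catalan_fps (n - k)
     + fps_nth catalan_fps k * fps_nth pairs_fps (n - k))"
proof -
  have "fps_nth pairs_fps n = fps_nth (pairs_fps * catalan_fps) n
      + fps_nth (fps_X * central_binomial_fps * catalan_fps) n + fps_nth (catalan_fps * pairs_fps) n"
    by (subst pairs_fps_equation) (simp only: fps_add_nth)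
  then show ?thesis
    by (simp add: fps_mult_nth_interior catalan_fps_nth_0 pairs_fps_nth_0 X_central_binomial_fps_nth
        sum.distrib distrib_right del: fps_X_mult_nth)
qed

lemma dist_fps_rec:
  assumes "n \<ge> 2"
  shows "fps_nth dist_fps n = (\<Sum>k=1..n-1.
     (fps_nth dist_fps k + fps_nth pairs_fps k + real k * fps_nth catalan_fps k) * fps_nth catalan_fps (n - k)
     + fps_nth catalan_fps k * fps_nth dist_fps (n - k))"
proof -
  have "fps_nth dist_fps n = fps_nth ((dist_fps + pairs_fps + fps_X * central_binomial_fps) * catalan_fps) n
      + fps_nth (catalan_fps * dist_fps) n"
    by (subst dist_fps_equation) (simp only: fps_add_nth)
  then show ?thesis
    by (simp add: fps_mult_nth_interior catalan_fps_nth_0 pairs_fps_nth_0 dist_fps_nth_0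
        X_central_binomial_fps_nth sum.distrib distrib_right del: fps_X_mult_nth)
qed

section \<open>Closed forms\<close>

lemma card_trees_eq_catalan_fps: "real (card (trees n)) = fps_nth catalan_fps n"
proof (induction n rule: less_induct)
  case (less n)
  consider "n = 0" | "n = 1" | "n \<ge> 2" by linarith
  then show ?case
  proof cases
    case 3
    with less show ?thesis
      unfolding card_trees_rec[OF 3] catalan_fps_rec[OF 3] by (intro sum.cong) auto
  qed (simp_all add: trees_0 trees_1 catalan_fps_nth_0 catalan_fps_nth_Suc catalan_def)
qed

lemma total_pairs_eq_pairs_fps: "real (total_pairs n) = fps_nth pairs_fps n"
proof (induction n rule: less_induct)
  case (less n)
  consider "n = 0" | "n = 1" | "n \<ge> 2" by linarith
  then show ?case
  proof cases
    case 3
    with less show ?thesis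
      unfolding total_pairs_rec[OF 3] pairs_fps_rec[OF 3] card_trees_eq_catalan_fps
      by (intro sum.cong) auto
  qed (simp_all add: total_pairs_eq_depth_total depth_total_def trees_0 trees_1 vertices_Node pairs_fps_nth_0 pairs_fps_nth)
qed

lemma total_dist_eq_dist_fps: "real (total_dist n) = fps_nth dist_fps n"
proof (induction n rule: less_induct)
  case (less n)
  consider "n = 0" | "n = 1" | "n \<ge> 2" by linarith
  then show ?case
  proof cases
    case 3
    with less show ?thesis
      unfolding total_dist_rec[OF 3] dist_fps_rec[OF 3] card_trees_eq_catalan_fps total_pairs_eq_pairs_fps
      by (intro sum.cong) auto
  qed (simp_all add: total_dist_eq_depth_total depth_total_def trees_0 trees_1 vertices_Node dist_fps_def fps_X_power_mult_nth)
qed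

lemma total_pairs_Suc: "real (total_pairs (Suc m)) = (4 ^ m - real ((2 * m) choose m)) / 2"
  by (simp add: total_pairs_eq_pairs_fps pairs_fps_nth)

lemma total_dist_Suc: "real (total_dist (Suc m)) = real m * real ((2 * m) choose m) / 2"
proof (cases m)
  case 0
  then show ?thesis by (simp add: total_dist_eq_dist_fps dist_fps_def)
next
  case (Suc j)
  then show ?thesis
    using central_binomial_Suc[of j]
    by (simp add: total_dist_eq_dist_fps dist_fps_nth del: binomial_Suc_Suc)
qed

lemma total_dist_fact:
  assumes "n \<ge> 2"
  shows "real (total_dist n) = fact (2 * n - 3) / (fact (n - 2))\<^sup>2"
proof -
  obtain j where n: "n = Suc (Suc j)"
    using le_Suc_ex[OF assms] by auto
  have "real (total_dist n) = (2 * real j + 1) * real ((2 * j) choose j)"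
    using central_binomial_Suc[of j] by (simp add: n total_dist_Suc del: binomial_Suc_Suc)
  also have "\<dots> = (2 * real j + 1) * fact (2 * j) / (fact j)\<^sup>2"
    by (simp add: binomial_fact power2_eq_square)
  also have "\<dots> = fact (2 * n - 3) / (fact (n - 2))\<^sup>2"
    by (simp add: n numeral_3_eq_3)
  finally show ?thesis .
qed

lemma total_dist_choose_catalan: "real (total_dist (Suc m)) = real (Suc m choose 2) * catalan m"
proof -
  have choose: "real (Suc m choose 2) = (real m + 1) * real m / 2"
    by (auto simp add: choose_two field_char_0_class.of_nat_div mod_eq_0_iff_dvd algebra_simps)
  show ?thesis
    unfolding total_dist_Suc catalan_def choose by (simp add: field_simps)
qed

section \<open>Wallis bounds and asymptotics\<close>

definition dfact_ratio :: "nat \<Rightarrow> real" where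
  "dfact_ratio m = real (dfact (2 * m)) / real (dfact (2 * m - 1))"

lemma dfact_pos: "0 < dfact n"
  by (induction n rule: dfact.induct) auto

lemma dfact_ratio_pos: "0 < dfact_ratio m"
  by (simp add: dfact_ratio_def dfact_pos)

lemma dfact_ratio_0: "dfact_ratio 0 = 1"
  by (simp add: dfact_ratio_def)

lemma dfact_ratio_Suc: "dfact_ratio (Suc m) = dfact_ratio m * (2 * real m + 2) / (2 * real m + 1)"
proof -
  have "dfact (2 * Suc m) = (2 * m + 2) * dfact (2 * m)"
    by (simp add: numeral_2_eq_2)
  moreover have "dfact (2 * Suc m - 1) = (2 * m + 1) * dfact (2 * m - 1)"
    by (cases m) (simp_all add: numeral_2_eq_2)
  ultimately show ?thesis
    using dfact_pos[of "2 * m - 1"] by (simp add: dfact_ratio_def field_simps)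
qed

lemma wallis_partial_product:
  "(\<Prod>k=1..m. 4 * real k ^ 2 / (4 * real k ^ 2 - 1)) = dfact_ratio m ^ 2 / (2 * real m + 1)"
proof (induction m)
  case (Suc m)
  let ?F = "\<lambda>k. 4 * real k ^ 2 / (4 * real k ^ 2 - 1)"
  have pos: "0 < 2 * real m + 1" "0 < 2 * real m + 3" by linarith+
  have "(\<Prod>k=1..Suc m. ?F k) = (\<Prod>k=1..m. ?F k) * ?F (Suc m)"
    by (simp add: prod.nat_ivl_Suc')
  also have "(\<Prod>k=1..m. ?F k) = dfact_ratio m ^ 2 / (2 * real m + 1)"
    by (rule Suc)
  also have "?F (Suc m) = (2 * real m + 2) ^ 2 / ((2 * real m + 1) * (2 * real m + 3))"
    by (simp add: power2_eq_square algebra_simps)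
  also have "dfact_ratio m ^ 2 / (2 * real m + 1) * ((2 * real m + 2) ^ 2 / ((2 * real m + 1) * (2 * real m + 3)))
      = (dfact_ratio m * (2 * real m + 2) / (2 * real m + 1)) ^ 2 / (2 * real m + 3)"
    using pos by (simp add: field_simps power2_eq_square)
  finally show ?case
    using Suc by (simp add: dfact_ratio_Suc algebra_simps)
qed (simp add: dfact_ratio_0)

lemma dfact_ratio_squared_le: "dfact_ratio m ^ 2 \<le> pi * (real m + 1/2)"
proof -
  let ?W = "\<lambda>m. \<Prod>k=1..m. 4 * real k ^ 2 / (4 * real k ^ 2 - 1)"
  have "incseq ?W"
  proof (rule incseq_SucI)
    fix m
    have "1 \<le> real (Suc m) ^ 2" by simp
    then have "0 < 4 * real (Suc m) ^ 2 - 1" by linarith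
    then have "1 \<le> 4 * real (Suc m) ^ 2 / (4 * real (Suc m) ^ 2 - 1)"
      by (subst le_divide_eq_1_pos) auto
    moreover have "0 \<le> ?W m"
      by (subst wallis_partial_product) simp
    ultimately have "?W m * 1 \<le> ?W m * (4 * real (Suc m) ^ 2 / (4 * real (Suc m) ^ 2 - 1))"
      by (intro mult_left_mono)
    then show "?W m \<le> ?W (Suc m)"
      by (simp add: prod.nat_ivl_Suc')
  qed
  then have "?W m \<le> pi / 2"
    using wallis by (rule incseq_le)
  then have "dfact_ratio m ^ 2 / (2 * real m + 1) \<le> pi / 2"
    by (simp only: wallis_partial_product)
  moreover have "0 < 2 * real m + 1" by linarith
  ultimately show ?thesis
    by (simp add: field_simps)
qed

lemma dfact_ratio_squared_div_decseq: "decseq (\<lambda>j. dfact_ratio (Suc j) ^ 2 / real (Suc j))"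
proof (rule decseq_SucI)
  fix j
  let ?r = "dfact_ratio (Suc j)"
  have pos: "0 < 2 * real j + 3" "0 < real j + 1" by linarith+
  have "dfact_ratio (Suc (Suc j)) = ?r * (2 * real j + 4) / (2 * real j + 3)"
    by (simp add: dfact_ratio_Suc[of "Suc j"] algebra_simps)
  then have "dfact_ratio (Suc (Suc j)) ^ 2 / real (Suc (Suc j))
      = ?r ^ 2 * ((2 * real j + 4) ^ 2 / ((2 * real j + 3) ^ 2 * (real j + 2)))"
    by (simp add: power_divide power_mult_distrib add.commute)
  also have "\<dots> \<le> ?r ^ 2 * (1 / (real j + 1))"
  proof (intro mult_left_mono)
    have "(2 * real j + 4) ^ 2 * (real j + 1) \<le> (2 * real j + 3) ^ 2 * (real j + 2)"
      by (simp add: power2_eq_square algebra_simps)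
    moreover have "0 < (2 * real j + 3) ^ 2 * (real j + 2)"
      using pos by simp
    ultimately show "(2 * real j + 4) ^ 2 / ((2 * real j + 3) ^ 2 * (real j + 2)) \<le> 1 / (real j + 1)"
      using pos by (simp add: divide_le_eq le_divide_eq mult.commute)
  qed simp
  also have "\<dots> = ?r ^ 2 / real (Suc j)"
    by simp
  finally show "dfact_ratio (Suc (Suc j)) ^ 2 / real (Suc (Suc j)) \<le> ?r ^ 2 / real (Suc j)" .
qed

lemma dfact_ratio_squared_ge:
  assumes "m \<ge> 1"
  shows "pi * real m \<le> dfact_ratio m ^ 2"
proof -
  let ?Z = "\<lambda>j. dfact_ratio (Suc j) ^ 2 / real (Suc j)"
  have "decseq ?Z"
    by (rule dfact_ratio_squared_div_decseq)
  moreover have "?Z \<longlonglongrightarrow> pi"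
  proof -
    have "?Z j = (\<Prod>k=1..Suc j. 4 * real k ^ 2 / (4 * real k ^ 2 - 1)) * (2 + 1 / real (Suc j))" for j
    proof -
      have "2 + 1 / real (Suc j) = (2 * real (Suc j) + 1) / real (Suc j)"
        by (simp add: field_simps)
      then show ?thesis
        by (subst wallis_partial_product) simp
    qed
    moreover have "(\<lambda>j. (\<Prod>k=1..Suc j. 4 * real k ^ 2 / (4 * real k ^ 2 - 1)) * (2 + 1 / real (Suc j)))
        \<longlonglongrightarrow> pi / 2 * (2 + 0)"
      by (intro tendsto_intros LIMSEQ_Suc[OF wallis] LIMSEQ_inverse_real_of_nat[unfolded inverse_eq_divide])
    ultimately show ?thesis by simp
  qed
  ultimately have "pi \<le> ?Z (m - 1)"
    by (rule decseq_ge)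
  with assms show ?thesis
    by (simp add: field_simps)
qed

lemma dfact_ratio_central_binomial: "dfact_ratio m = 4 ^ m / real ((2 * m) choose m)"
proof (induction m)
  case (Suc m)
  define c where "c = real ((2 * m) choose m)"
  have pos: "0 < c" "0 < c * (2 * real m + 1)" "0 < 2 * c * (2 * real m + 1)" "0 < 2 * real m + 1"
    by (simp_all add: c_def)
  have "real ((2 * Suc m) choose Suc m) = 2 * (2 * real m + 1) * c / (real m + 1)"
    using central_binomial_Suc[of m] by (simp add: c_def field_simps del: binomial_Suc_Suc)
  then have "4 ^ Suc m / real ((2 * Suc m) choose Suc m) = 4 ^ Suc m / (2 * (2 * real m + 1) * c / (real m + 1))"
    by (simp only:)
  also have "\<dots> = 4 ^ m / c * (2 * real m + 2) / (2 * real m + 1)"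
    using pos by (simp add: field_simps)
  finally show ?case
    by (simp add: dfact_ratio_Suc Suc c_def)
qed (simp add: dfact_ratio_0)

text \<open>For \<open>m = 0\<close> both sides are \<open>0 / 0 = 0\<close>.\<close>
lemma expected_len_Suc: "expected_len (Suc m) = real m / (dfact_ratio m - 1)"
proof -
  define c where "c = real ((2 * m) choose m)"
  have "0 < c" by (simp add: c_def)
  have "expected_len (Suc m) = real m * c / (4 ^ m - c)"
    by (simp add: expected_len_def total_pairs_Suc total_dist_Suc c_def)
  also have "\<dots> = real m / ((4 ^ m - c) / c)"
    by simp
  also have "(4 ^ m - c) / c = dfact_ratio m - 1"
    using \<open>0 < c\<close> by (simp add: dfact_ratio_central_binomial c_def diff_divide_distrib)
  finally show ?thesis .
qed

lemma sqrt_div_pi_Suc_diff: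
  fixes x :: real
  assumes "0 \<le> x"
  shows "sqrt ((x + 1) / pi) - sqrt (x / pi) \<le> 1 / sqrt (x + 1)"
proof -
  have "(sqrt (x + 1) - sqrt x) * sqrt (x + 1) = x + 1 - sqrt x * sqrt (x + 1)"
    using assms by (simp add: algebra_simps)
  also have "\<dots> \<le> 1"
  proof -
    have "x = sqrt (x * x)" using assms by simp
    also have "\<dots> \<le> sqrt (x * (x + 1))"
      by (rule real_sqrt_le_mono) (simp add: assms algebra_simps)
    also have "\<dots> = sqrt x * sqrt (x + 1)"
      by (rule real_sqrt_mult)
    finally show ?thesis by simp
  qed
  finally have "sqrt (x + 1) - sqrt x \<le> 1 / sqrt (x + 1)"
    using assms by (simp add: le_divide_eq)
  moreover have "1 \<le> sqrt pi"
    using pi_gt3 by simp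
  moreover have "0 \<le> sqrt (x + 1) - sqrt x"
    by (simp add: real_sqrt_le_mono)
  ultimately have "(sqrt (x + 1) - sqrt x) / sqrt pi \<le> 1 / sqrt (x + 1)"
    by (smt (verit) divide_le_eq mult_le_cancel_left1)
  then show ?thesis
    by (simp add: real_sqrt_divide diff_divide_distrib)
qed

lemma abs_one_minus_gap_le:
  fixes s q :: real
  assumes "2 \<le> s" "s \<le> q" "q\<^sup>2 \<le> s\<^sup>2 + pi / 2"
  shows "\<bar>1 - (q - s) * (s + 1)\<bar> \<le> 1"
proof -
  define e where "e = q - s"
  have "0 \<le> e" using assms(2) by (simp add: e_def)
  have "e * (2 * s) \<le> e * (q + s)"
    using \<open>0 \<le> e\<close> assms(2) by (intro mult_left_mono) auto
  also have "\<dots> = q\<^sup>2 - s\<^sup>2"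
    by (simp add: e_def power2_eq_square algebra_simps)
  finally have "e * s \<le> pi / 4"
    using assms(3) by simp
  moreover have "e * 2 \<le> e * s"
    using assms(1) \<open>0 \<le> e\<close> by (rule mult_left_mono)
  moreover have "0 \<le> e * (s + 1)"
    using \<open>0 \<le> e\<close> assms(1) by simp
  ultimately show ?thesis
    using pi_less_4 by (simp add: e_def [symmetric] abs_le_iff algebra_simps)
qed

lemma wallis_bounds_approx:
  fixes m q :: real
  assumes m: "2 \<le> m" and lo: "pi * m \<le> q\<^sup>2" and up: "q\<^sup>2 \<le> pi * (m + 1/2)" and "0 \<le> q"
  shows "\<bar>m / (q - 1) - sqrt (m / pi) - 1 / pi\<bar> \<le> 1 / sqrt (m + 1)"
proof -
  define s where "s = sqrt (pi * m)"
  have s2: "s\<^sup>2 = pi * m"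
    unfolding s_def using m by simp
  have "3 * m \<le> pi * m"
    using m pi_gt3 by (intro mult_right_mono) auto
  then have "m + 1 \<le> pi * m" "4 \<le> pi * m"
    using m by linarith+
  then have s_ge: "sqrt (m + 1) \<le> s" and "sqrt 4 \<le> s"
    unfolding s_def by (simp_all only: real_sqrt_le_mono)
  then have "2 \<le> s" by simp
  have "s \<le> q"
    unfolding s_def using lo \<open>0 \<le> q\<close> real_sqrt_le_mono by fastforce
  have num: "\<bar>1 - (q - s) * (s + 1)\<bar> \<le> 1"
    using \<open>2 \<le> s\<close> \<open>s \<le> q\<close> up s2 by (intro abs_one_minus_gap_le) (auto simp: algebra_simps)
  have "s / 2 \<le> q - 1" "0 < s / 2"
    using \<open>s \<le> q\<close> \<open>2 \<le> s\<close> by simp_all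
  have "sqrt (m / pi) = s / pi"
    unfolding s_def using m by (simp add: real_sqrt_divide real_sqrt_mult field_simps)
  then have "m / (q - 1) - sqrt (m / pi) - 1 / pi = (pi * m - (s + 1) * (q - 1)) / (pi * (q - 1))"
    using \<open>0 < s / 2\<close> \<open>s / 2 \<le> q - 1\<close> by (simp add: field_simps)
  also have "pi * m - (s + 1) * (q - 1) = 1 - (q - s) * (s + 1)"
    using s2 by (simp add: power2_eq_square algebra_simps)
  also have "\<bar>(1 - (q - s) * (s + 1)) / (pi * (q - 1))\<bar> = \<bar>1 - (q - s) * (s + 1)\<bar> / (pi * (q - 1))"
    using \<open>0 < s / 2\<close> \<open>s / 2 \<le> q - 1\<close> by (simp add: abs_divide)
  also have "\<dots> \<le> 1 / (pi * (s / 2))"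
    using num \<open>0 < s / 2\<close> \<open>s / 2 \<le> q - 1\<close> by (intro frac_le mult_left_mono) auto
  also have "\<dots> \<le> 1 / s"
    using pi_gt3 \<open>2 \<le> s\<close> by (simp add: field_simps)
  also have "\<dots> \<le> 1 / sqrt (m + 1)"
    using s_ge m by (simp add: frac_le)
  finally show ?thesis .
qed

lemma expected_len_asymptotics:
  "(\<lambda>n. expected_len n - sqrt (real n / pi) - 1 / pi) \<in> O(\<lambda>n. 1 / sqrt (real n))"
proof (rule bigoI[where c = 2])
  show "\<forall>\<^sub>F n in at_top. norm (expected_len n - sqrt (real n / pi) - 1 / pi) \<le> 2 * norm (1 / sqrt (real n))"
    using eventually_ge_at_top[of 3]
  proof eventually_elim
    fix n :: nat
    assume "3 \<le> n"
    then obtain m where n: "n = Suc m" and "2 \<le> m"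
      by (cases n) auto
    have approx: "\<bar>real m / (dfact_ratio m - 1) - sqrt (real m / pi) - 1 / pi\<bar> \<le> 1 / sqrt (real m + 1)"
      using \<open>2 \<le> m\<close> dfact_ratio_squared_ge[of m] dfact_ratio_squared_le[of m] dfact_ratio_pos[of m]
      by (intro wallis_bounds_approx) auto
    define E where "E = real m / (dfact_ratio m - 1) - sqrt (real m / pi) - 1 / pi"
    define D where "D = sqrt ((real m + 1) / pi) - sqrt (real m / pi)"
    define u where "u = 1 / sqrt (real m + 1)"
    have "0 \<le> D" "D \<le> u"
      unfolding D_def u_def by (simp_all add: divide_right_mono sqrt_div_pi_Suc_diff)
    with approx have "\<bar>E - D\<bar> \<le> 2 * u"
      unfolding E_def[symmetric] u_def[symmetric] by (simp add: abs_le_iff)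
    moreover have "expected_len n - sqrt (real n / pi) - 1 / pi = E - D" "1 / sqrt (real n) = u"
      by (simp_all add: E_def D_def u_def n expected_len_Suc add.commute)
    ultimately show "norm (expected_len n - sqrt (real n / pi) - 1 / pi) \<le> 2 * norm (1 / sqrt (real n))"
      by (simp add: u_def)
  qed
qed

theorem mainTheorem8:
  shows "(\<forall>n::nat. n \<ge> 2 \<longrightarrow>
            real (total_pairs n) = (4 ^ (n - 1) - real ((2 * n - 2) choose (n - 1))) / 2
          \<and> real (total_dist n) = fact (2 * n - 3) / (fact (n - 2))\<^sup>2
          \<and> real (total_dist n) = real (n choose 2) * catalan (n - 1)
          \<and> expected_len n = real (n - 1) / (real (dfact (2 * n - 2)) / real (dfact (2 * n - 3)) - 1))
       \<and> (\<lambda>n. expected_len n - sqrt (real n / pi) - 1 / pi) \<in> O(\<lambda>n. 1 / sqrt (real n))"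
proof (intro conjI allI impI expected_len_asymptotics)
  fix n :: nat
  assume "n \<ge> 2"
  then obtain m where n: "n = Suc m"
    by (cases n) auto
  have idx: "2 * n - 2 = 2 * m" "2 * n - 3 = 2 * m - 1"
    using n by simp_all
  show "real (total_pairs n) = (4 ^ (n - 1) - real ((2 * n - 2) choose (n - 1))) / 2"
    by (simp add: n idx total_pairs_Suc)
  show "real (total_dist n) = fact (2 * n - 3) / (fact (n - 2))\<^sup>2"
    using \<open>n \<ge> 2\<close> by (rule total_dist_fact)
  show "real (total_dist n) = real (n choose 2) * catalan (n - 1)"
    by (simp add: n total_dist_choose_catalan del: of_nat_Suc)
  show "expected_len n = real (n - 1) / (real (dfact (2 * n - 2)) / real (dfact (2 * n - 3)) - 1)"
    by (simp add: n idx expected_len_Suc dfact_ratio_def)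
qed

end
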